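(* $t(K(10,4))=\frac{3}{2}$. Moreover, if $S$ is a vertex cut of $K(10,4)$ such that $\frac{|S|}{c(K(10,4)\setminus S)} = \frac{3}{2}$, then $S$ is the complement of a maximum independent set of $K(10,4)$.
   Context: The Kneser graph $K(n,k)$ has as vertices the $k$-element subsets of $[n]=\{1,\dots,n\}$, two vertices being adjacent iff they are disjoint. A vertex cut is a set $S$ of vertices whose removal disconnects the graph; $c(G\setminus S)$ is the number of connected components after deleting $S$; the toughness is $t(G)=\min_S |S|/c(G\setminus S)$ over vertex cuts $S$. *)

theory Defs
  imports Complex_Main
begin

definition kneser_vertices :: "nat \<Rightarrow> nat \<Rightarrow> nat set set" where
  "kneser_vertices n k = {A. A \<subseteq> {1..n} \<and> card A = k}"

definition kneser_adj :: "nat set \<Rightarrow> nat set \<Rightarrow> bool" where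
  "kneser_adj A B \<longleftrightarrow> A \<inter> B = {}"

definition reach_in :: "('a \<Rightarrow> 'a \<Rightarrow> bool) \<Rightarrow> 'a set \<Rightarrow> 'a \<Rightarrow> 'a \<Rightarrow> bool" where
  "reach_in E W = (\<lambda>x y. x \<in> W \<and> y \<in> W \<and> E x y)\<^sup>*\<^sup>*"

definition components_in :: "('a \<Rightarrow> 'a \<Rightarrow> bool) \<Rightarrow> 'a set \<Rightarrow> 'a set set" where
  "components_in E W = (\<lambda>x. {y \<in> W. reach_in E W x y}) ` W"

definition num_components :: "('a \<Rightarrow> 'a \<Rightarrow> bool) \<Rightarrow> 'a set \<Rightarrow> nat" where
  "num_components E W = card (components_in E W)"

definition vertex_cut :: "'a set \<Rightarrow> ('a \<Rightarrow> 'a \<Rightarrow> bool) \<Rightarrow> 'a set \<Rightarrow> bool" where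
  "vertex_cut V E S \<longleftrightarrow> S \<subseteq> V \<and> num_components E (V - S) \<ge> 2"

definition toughness :: "'a set \<Rightarrow> ('a \<Rightarrow> 'a \<Rightarrow> bool) \<Rightarrow> real" where
  "toughness V E = Min {real (card S) / real (num_components E (V - S)) | S. vertex_cut V E S}"

definition independent_set :: "'a set \<Rightarrow> ('a \<Rightarrow> 'a \<Rightarrow> bool) \<Rightarrow> 'a set \<Rightarrow> bool" where
  "independent_set V E I \<longleftrightarrow> I \<subseteq> V \<and> (\<forall>x\<in>I. \<forall>y\<in>I. \<not> E x y)"

definition maximum_independent_set :: "'a set \<Rightarrow> ('a \<Rightarrow> 'a \<Rightarrow> bool) \<Rightarrow> 'a set \<Rightarrow> bool" where
  "maximum_independent_set V E I \<longleftrightarrow> independent_set V E I \<and>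
     (\<forall>J. independent_set V E J \<longrightarrow> card J \<le> card I)"

end

theory Submission
  imports Defs "HOL-Combinatorics.Permutations"
begin

(* The lower bound is spectral. The least eigenvalue of K(10,4) is -10: every relabelling of
   {1..10} maps a fixed Petersen subgraph K(5,2) into K(10,4), and averaging over all
   relabellings the inequality saying that the Petersen graph has least eigenvalue -2 shows
   that x^T (A + 10 I) x >= 0 for the adjacency matrix A of K(10,4).
   For a vertex cut S, evaluate this form at the vector that is -1 on S and 3/(2|C|) on each
   component C of K(10,4) - S. The result bounds by 25|S| a sum over the components whose
   terms depend only on |C| and on the number e(C) of edges leaving C. The edge expansion of
   K(10,4) (e(C) >= 38 when C and its complement both have at least 14 vertices, and
   e(C) >= |C| (16 - |C|) in general) makes every term at least 75/2, with equality only for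
   singletons. Hence |S| >= 3/2 c(K(10,4) - S); in the equality case K(10,4) - S is independent
   and has 84 vertices, and the star of all 4-sets through 1 attains the bound. *)

section \<open>Components and vertex cuts\<close>

definition component_of :: "('a \<Rightarrow> 'a \<Rightarrow> bool) \<Rightarrow> 'a set \<Rightarrow> 'a \<Rightarrow> 'a set" where
  "component_of E W x = {y \<in> W. reach_in E W x y}"

lemma components_in_eq_image: "components_in E W = component_of E W ` W"
  by (simp add: components_in_def component_of_def)

lemma component_of_subset: "component_of E W x \<subseteq> W"
  by (auto simp: component_of_def)

lemma component_of_self: "x \<in> W \<Longrightarrow> x \<in> component_of E W x"
  by (simp add: component_of_def reach_in_def)

lemma component_of_adj: "x \<in> W \<Longrightarrow> y \<in> W \<Longrightarrow> E x y \<Longrightarrow> y \<in> component_of E W x"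
  by (simp add: component_of_def reach_in_def r_into_rtranclp)

lemma reach_in_sym:
  assumes "symp E" and "reach_in E W x y"
  shows "reach_in E W y x"
proof -
  have "symp (\<lambda>x y. x \<in> W \<and> y \<in> W \<and> E x y)"
    using \<open>symp E\<close> by (auto simp: symp_def)
  then show ?thesis
    using assms(2) symp_rtranclp unfolding reach_in_def by (blast dest: sympD)
qed

lemma component_of_eq:
  assumes "symp E" and "y \<in> component_of E W x"
  shows "component_of E W y = component_of E W x"
proof -
  have "reach_in E W x y" "reach_in E W y x"
    using assms reach_in_sym by (auto simp: component_of_def)
  then show ?thesis
    unfolding component_of_def reach_in_def by (blast intro: rtranclp_trans)
qed

lemma component_of_eq_components_in:
  assumes "symp E" and "C \<in> components_in E W" and "y \<in> C"
  shows "component_of E W y = C"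
proof -
  obtain x where "C = component_of E W x"
    using assms(2) by (auto simp: components_in_eq_image)
  then show ?thesis
    using component_of_eq[OF \<open>symp E\<close>] assms(3) by blast
qed

lemma components_in_disjoint:
  assumes "symp E" and "C \<in> components_in E W" and "C' \<in> components_in E W" and "C \<noteq> C'"
  shows "C \<inter> C' = {}"
proof (rule ccontr)
  assume "C \<inter> C' \<noteq> {}"
  then obtain z where z: "z \<in> C" "z \<in> C'" by blast
  have "component_of E W z = C" "component_of E W z = C'"
    using component_of_eq_components_in[OF \<open>symp E\<close> assms(2) z(1)]
      component_of_eq_components_in[OF \<open>symp E\<close> assms(3) z(2)] .
  with \<open>C \<noteq> C'\<close> show False by simp
qed

lemma Union_components_in: "\<Union> (components_in E W) = W"
proof
  show "\<Union> (components_in E W) \<subseteq> W"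
    by (auto simp: components_in_eq_image component_of_def)
  show "W \<subseteq> \<Union> (components_in E W)"
    using component_of_self by (auto simp: components_in_eq_image intro!: bexI)
qed

lemma components_in_subset: "C \<in> components_in E W \<Longrightarrow> C \<subseteq> W"
  by (auto simp: components_in_eq_image component_of_def)

lemma components_in_closed:
  assumes "symp E" and "C \<in> components_in E W" and "x \<in> C" and "y \<in> W" and "E x y"
  shows "y \<in> C"
proof -
  have "x \<in> W"
    using assms(2,3) components_in_subset by blast
  then show ?thesis
    using component_of_adj[of x W y E] assms(4,5) component_of_eq_components_in[OF assms(1-3)] by simp
qed

lemma sum_components_in:
  assumes "symp E" and "finite W"
  shows "(\<Sum>x\<in>W. f x) = (\<Sum>C\<in>components_in E W. \<Sum>x\<in>C. f x)"
proof -
  have "(\<Sum>x\<in>\<Union> (components_in E W). f x) = (\<Sum>C\<in>components_in E W. \<Sum>x\<in>C. f x)"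
  proof (rule sum.Union_disjoint[unfolded comp_def])
    show "\<forall>C\<in>components_in E W. finite C"
      using finite_subset[OF components_in_subset assms(2)] by blast
    show "\<forall>C\<in>components_in E W. \<forall>C'\<in>components_in E W. C \<noteq> C' \<longrightarrow> C \<inter> C' = {}"
      by (intro ballI impI) (rule components_in_disjoint[OF assms(1)])
  qed
  then show ?thesis
    by (simp add: Union_components_in)
qed

lemma components_in_nonempty: "C \<in> components_in E W \<Longrightarrow> C \<noteq> {}"
  using component_of_self by (fastforce simp: components_in_eq_image)

lemma adj_within_small_components:
  assumes "finite W" and "\<forall>C\<in>components_in E W. card C \<le> 1"
    and "x \<in> W" and "y \<in> W" and "E x y"
  shows "x = y"
proof -
  have "component_of E W x \<in> components_in E W"
    using assms(3) by (simp add: components_in_eq_image)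
  moreover have "x \<in> component_of E W x" "y \<in> component_of E W x"
    using component_of_self[OF assms(3)] component_of_adj[of x W y E] assms(3-5) by simp_all
  moreover have "finite (component_of E W x)"
    using finite_subset[OF component_of_subset assms(1)] .
  ultimately have "card (component_of E W x) \<le> 1" "finite (component_of E W x)"
    "x \<in> component_of E W x" "y \<in> component_of E W x"
    using assms(2) by blast+
  then show ?thesis
    by (auto simp: card_le_Suc0_iff_eq)
qed

lemma num_components_independent:
  assumes "\<forall>x\<in>J. \<forall>y\<in>J. \<not> E x y"
  shows "num_components E J = card J"
proof -
  have "reach_in E J x y \<Longrightarrow> x = y" for x y
    unfolding reach_in_def by (induction rule: rtranclp_induct) (use assms in auto)
  then have "component_of E J x = {x}" if "x \<in> J" for x
    using that by (auto simp: component_of_def reach_in_def)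
  then have "components_in E J = (\<lambda>x. {x}) ` J"
    by (simp add: components_in_eq_image)
  then show ?thesis
    by (simp add: num_components_def card_image)
qed

lemma vertex_cut_complement_independent:
  assumes "J \<subseteq> V" and "\<forall>x\<in>J. \<forall>y\<in>J. \<not> E x y" and "2 \<le> card J"
  shows "vertex_cut V E (V - J)" and "num_components E (V - (V - J)) = card J"
proof -
  have "V - (V - J) = J"
    using assms(1) by blast
  then show "num_components E (V - (V - J)) = card J"
    using num_components_independent[OF assms(2)] by simp
  then show "vertex_cut V E (V - J)"
    using assms(3) by (simp add: vertex_cut_def)
qed

lemma toughness_eqI:
  assumes "finite V"
    and lower: "\<And>S. vertex_cut V E S \<Longrightarrow> t \<le> real (card S) / real (num_components E (V - S))"
    and "vertex_cut V E S\<^sub>0" and "real (card S\<^sub>0) / real (num_components E (V - S\<^sub>0)) = t"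
  shows "toughness V E = t"
proof -
  let ?ratio = "\<lambda>S. real (card S) / real (num_components E (V - S))"
  have "{?ratio S | S. vertex_cut V E S} = ?ratio ` {S. vertex_cut V E S}"
    by blast
  moreover have "finite {S. vertex_cut V E S}"
    using \<open>finite V\<close> by (auto simp: vertex_cut_def intro: finite_subset[of _ "Pow V"])
  ultimately have "finite {?ratio S | S. vertex_cut V E S}"
    by simp
  then show ?thesis
    unfolding toughness_def using assms(3,4) lower by (intro Min_eqI) auto
qed

section \<open>Regular graphs\<close>

definition nbhd :: "'a set \<Rightarrow> ('a \<Rightarrow> 'a \<Rightarrow> bool) \<Rightarrow> 'a \<Rightarrow> 'a set" where
  "nbhd V E x = {y \<in> V. E x y}"

definition arcs :: "'a set \<Rightarrow> ('a \<Rightarrow> 'a \<Rightarrow> bool) \<Rightarrow> ('a \<times> 'a) set" where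
  "arcs V E = {(x, y). x \<in> V \<and> y \<in> V \<and> E x y}"

definition cut_size :: "'a set \<Rightarrow> ('a \<Rightarrow> 'a \<Rightarrow> bool) \<Rightarrow> 'a set \<Rightarrow> nat" where
  "cut_size V E X = (\<Sum>x\<in>X. card (nbhd V E x - X))"

lemma arcs_eq_Sigma: "arcs V E = Sigma V (nbhd V E)"
  by (auto simp: arcs_def nbhd_def)

lemma exists_few_outside_nbhd:
  assumes "cut_size V E X < Suc k * card X"
  shows "\<exists>x\<in>X. card (nbhd V E x - X) \<le> k"
proof (rule ccontr)
  assume "\<not> (\<exists>x\<in>X. card (nbhd V E x - X) \<le> k)"
  then have "(\<Sum>x\<in>X. Suc k) \<le> cut_size V E X"
    unfolding cut_size_def by (intro sum_mono) (auto simp: not_le Suc_le_eq)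
  with assms show False
    by (simp add: mult.commute)
qed

locale regular_graph =
  fixes V :: "'a set" and E :: "'a \<Rightarrow> 'a \<Rightarrow> bool" and d :: nat
  assumes finite_vertices: "finite V"
    and adj_sym: "E x y \<Longrightarrow> E y x"
    and adj_irrefl: "x \<in> V \<Longrightarrow> \<not> E x x"
    and card_nbhd: "x \<in> V \<Longrightarrow> card (nbhd V E x) = d"
begin

lemma symp_adj: "symp E"
  by (auto intro: sympI adj_sym)

lemma nbhd_subset: "nbhd V E x \<subseteq> V"
  by (auto simp: nbhd_def)

lemma finite_nbhd: "finite (nbhd V E x)"
  using finite_subset[OF nbhd_subset finite_vertices] .

lemma card_nbhd_Int_Diff: "x \<in> V \<Longrightarrow> card (nbhd V E x \<inter> X) + card (nbhd V E x - X) = d"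
  using card_Int_Diff[OF finite_nbhd, of x X] card_nbhd by simp

lemma sum_nbhd_swap:
  fixes f :: "'a \<Rightarrow> 'b::comm_semiring_1"
  assumes "X \<subseteq> V" and "Y \<subseteq> V"
  shows "(\<Sum>x\<in>X. \<Sum>y\<in>nbhd V E x \<inter> Y. f y) = (\<Sum>y\<in>Y. of_nat (card (nbhd V E y \<inter> X)) * f y)"
proof -
  have fin: "finite X" "finite Y"
    using assms finite_subset finite_vertices by blast+
  have "nbhd V E x \<inter> Y = {y \<in> Y. E x y}" if "x \<in> X" for x
    using assms by (auto simp: nbhd_def)
  then have "(\<Sum>x\<in>X. \<Sum>y\<in>nbhd V E x \<inter> Y. f y) = (\<Sum>x\<in>X. \<Sum>y\<in>Y. if E x y then f y else 0)"
    by (simp add: sum.inter_filter[OF fin(2)])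
  also have "\<dots> = (\<Sum>y\<in>Y. \<Sum>x\<in>X. if E x y then f y else 0)"
    by (rule sum.swap)
  also have "\<dots> = (\<Sum>y\<in>Y. of_nat (card (nbhd V E y \<inter> X)) * f y)"
  proof (rule sum.cong[OF refl])
    fix y assume "y \<in> Y"
    have "nbhd V E y \<inter> X = {x \<in> X. E x y}"
      using assms adj_sym by (auto simp: nbhd_def)
    then show "(\<Sum>x\<in>X. if E x y then f y else 0) = of_nat (card (nbhd V E y \<inter> X)) * f y"
      by (simp add: sum.inter_filter[OF fin(1), symmetric])
  qed
  finally show ?thesis .
qed

lemma card_nbhd_swap:
  assumes "X \<subseteq> V" and "Y \<subseteq> V"
  shows "(\<Sum>x\<in>X. card (nbhd V E x \<inter> Y)) = (\<Sum>y\<in>Y. card (nbhd V E y \<inter> X))"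
  using sum_nbhd_swap[OF assms, of "\<lambda>_. 1 :: nat"] by simp

lemma sum_card_nbhd_Int_le:
  assumes "X \<subseteq> V" and "Y \<subseteq> V"
  shows "(\<Sum>y\<in>Y. card (nbhd V E y \<inter> X)) \<le> d * card X"
proof -
  have "(\<Sum>y\<in>Y. card (nbhd V E y \<inter> X)) = (\<Sum>x\<in>X. card (nbhd V E x \<inter> Y))"
    by (rule card_nbhd_swap[OF assms(2,1)])
  also have "\<dots> \<le> (\<Sum>x\<in>X. card (nbhd V E x))"
    by (intro sum_mono card_mono finite_nbhd) auto
  also have "\<dots> = d * card X"
    using assms(1) card_nbhd by (simp add: subset_iff)
  finally show ?thesis .
qed

lemma cut_size_eq: "X \<subseteq> V \<Longrightarrow> cut_size V E X = (\<Sum>x\<in>X. card (nbhd V E x \<inter> (V - X)))"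
proof -
  have "nbhd V E x - X = nbhd V E x \<inter> (V - X)" for x
    using nbhd_subset by blast
  then show ?thesis
    by (simp add: cut_size_def)
qed

lemma cut_size_complement:
  assumes "X \<subseteq> V"
  shows "cut_size V E (V - X) = cut_size V E X"
proof -
  have "V - (V - X) = X"
    using assms by blast
  then show ?thesis
    using cut_size_eq[of "V - X"] cut_size_eq[OF assms] card_nbhd_swap[OF assms, of "V - X"] by simp
qed

lemma cut_size_lower_bound:
  assumes "X \<subseteq> V"
  shows "card X * (d + 1 - card X) \<le> cut_size V E X"
proof -
  have "d + 1 - card X \<le> card (nbhd V E x - X)" if "x \<in> X" for x
  proof -
    have fin: "finite X"
      using assms finite_subset finite_vertices by blast
    have "nbhd V E x \<inter> X \<subseteq> X - {x}"
      using adj_irrefl that assms by (auto simp: nbhd_def)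
    then have "card (nbhd V E x \<inter> X) \<le> card (X - {x})"
      by (rule card_mono[rotated]) (use fin in simp)
    then have "card (nbhd V E x \<inter> X) \<le> card X - 1"
      using that fin by simp
    moreover have "x \<in> V" "1 \<le> card X"
      using that assms fin by (auto simp: Suc_le_eq card_gt_0_iff)
    ultimately show ?thesis
      using card_nbhd_Int_Diff[of x X] by linarith
  qed
  then have "(\<Sum>x\<in>X. d + 1 - card X) \<le> cut_size V E X"
    unfolding cut_size_def by (rule sum_mono)
  then show ?thesis
    by simp
qed

lemma exists_closed_nbhd:
  assumes "cut_size V E X < card X"
  shows "\<exists>x\<in>X. nbhd V E x \<subseteq> X"
  using exists_few_outside_nbhd[of V E X 0] assms finite_nbhd by auto

lemma sum_arcs_eq: "(\<Sum>(x, y)\<in>arcs V E. f x y) = (\<Sum>x\<in>V. \<Sum>y\<in>nbhd V E x. f x y)"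
  unfolding arcs_eq_Sigma by (rule sum.Sigma[symmetric]) (simp_all add: finite_vertices finite_nbhd)

lemma sum_arcs_swap: "(\<Sum>(x, y)\<in>arcs V E. f x y) = (\<Sum>(x, y)\<in>arcs V E. f y x)"
  by (rule sum.reindex_bij_witness[where i = prod.swap and j = prod.swap]) (auto simp: arcs_def adj_sym)

lemma sum_card_nbhd_Int_add_cut_size:
  assumes "X \<subseteq> V"
  shows "(\<Sum>x\<in>X. card (nbhd V E x \<inter> X)) + cut_size V E X = d * card X"
  using card_nbhd_Int_Diff assms by (simp add: cut_size_def sum.distrib[symmetric] subset_iff)

lemma cut_size_eq_outside:
  assumes "X \<subseteq> V"
  shows "cut_size V E X = (\<Sum>y\<in>V - X. card (nbhd V E y \<inter> X))"
  using cut_size_eq[OF assms] card_nbhd_swap[OF assms, of "V - X"] by simp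

lemma sum_nbhd_cut_vector:
  fixes x :: "'a \<Rightarrow> real"
  assumes "\<And>A. A \<in> S \<Longrightarrow> x A = -1"
  shows "(\<Sum>B\<in>nbhd V E A. x B) = (\<Sum>B\<in>nbhd V E A \<inter> (V - S). x B) - card (nbhd V E A \<inter> S)"
proof -
  have "nbhd V E A \<inter> (V - S) = nbhd V E A - S"
    using nbhd_subset by blast
  then show ?thesis
    using sum.Int_Diff[OF finite_nbhd, of x A S] assms by simp
qed

lemma quadratic_form_cut_vector:
  fixes x :: "'a \<Rightarrow> real" and c :: real
  assumes "S \<subseteq> V"
    and on_cut: "\<And>A. A \<in> S \<Longrightarrow> x A = -1"
    and const: "\<And>A B. A \<in> V - S \<Longrightarrow> B \<in> V - S \<Longrightarrow> E A B \<Longrightarrow> x B = x A"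
  shows "(\<Sum>(A, B)\<in>arcs V E. x A * x B) + c * (\<Sum>A\<in>V. (x A)\<^sup>2) =
    (d + c) * card S - (\<Sum>A\<in>V - S. (1 + x A)\<^sup>2 * card (nbhd V E A \<inter> S) - (d + c) * (x A)\<^sup>2)"
proof -
  define W where "W = V - S"
  define e where "e A = real (card (nbhd V E A \<inter> S))" for A
  have V_split: "V = W \<union> S" "W \<inter> S = {}" and "W \<subseteq> V" "finite W" "finite S"
    using assms(1) finite_vertices finite_subset by (auto simp: W_def)
  have row_W: "x A * (\<Sum>B\<in>nbhd V E A. x B) + c * (x A)\<^sup>2 = (d + c) * (x A)\<^sup>2 - e A * (x A)\<^sup>2 - e A * x A"
    if "A \<in> W" for A
  proof -
    have "(\<Sum>B\<in>nbhd V E A \<inter> W. x B) = card (nbhd V E A \<inter> W) * x A"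
      using const that by (simp add: W_def nbhd_def)
    moreover have "nbhd V E A \<inter> W = nbhd V E A - S"
      using nbhd_subset by (auto simp: W_def)
    then have "real (card (nbhd V E A \<inter> W)) = d - e A"
      using card_nbhd_Int_Diff[of A S] that \<open>W \<subseteq> V\<close> by (auto simp: e_def)
    ultimately have row_sum: "(\<Sum>B\<in>nbhd V E A. x B) = (d - e A) * x A - e A"
      using sum_nbhd_cut_vector[OF on_cut, where A = A] by (simp add: W_def e_def)
    show ?thesis
      unfolding row_sum by (simp add: power2_eq_square algebra_simps)
  qed
  have row_S: "x A * (\<Sum>B\<in>nbhd V E A. x B) + c * (x A)\<^sup>2 = e A + c - (\<Sum>B\<in>nbhd V E A \<inter> W. x B)"
    if "A \<in> S" for A
    using on_cut[OF that] by (simp add: sum_nbhd_cut_vector[OF on_cut] e_def W_def)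
  have S_to_W: "(\<Sum>A\<in>S. \<Sum>B\<in>nbhd V E A \<inter> W. x B) = (\<Sum>B\<in>W. e B * x B)"
    using sum_nbhd_swap[OF assms(1) \<open>W \<subseteq> V\<close>, of x] by (simp add: e_def)
  have S_internal: "(\<Sum>A\<in>S. e A) = d * card S - (\<Sum>B\<in>W. e B)"
    using arg_cong[where f = real, OF sum_card_nbhd_Int_add_cut_size[OF assms(1)]] cut_size_eq_outside[OF assms(1)]
    by (simp add: e_def W_def)
  have "(\<Sum>(A, B)\<in>arcs V E. x A * x B) + c * (\<Sum>A\<in>V. (x A)\<^sup>2)
      = (\<Sum>A\<in>W \<union> S. x A * (\<Sum>B\<in>nbhd V E A. x B) + c * (x A)\<^sup>2)"
    by (simp add: sum_arcs_eq sum.distrib sum_distrib_left flip: V_split(1))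
  also have "\<dots> = (\<Sum>A\<in>W. x A * (\<Sum>B\<in>nbhd V E A. x B) + c * (x A)\<^sup>2)
      + (\<Sum>A\<in>S. x A * (\<Sum>B\<in>nbhd V E A. x B) + c * (x A)\<^sup>2)"
    by (rule sum.union_disjoint[OF \<open>finite W\<close> \<open>finite S\<close> V_split(2)])
  also have "\<dots> = (\<Sum>A\<in>W. (d + c) * (x A)\<^sup>2 - e A * (x A)\<^sup>2 - e A * x A)
      + ((\<Sum>A\<in>S. e A) + c * card S - (\<Sum>A\<in>S. \<Sum>B\<in>nbhd V E A \<inter> W. x B))"
    by (simp add: row_W row_S sum.distrib sum_subtractf)
  also have "\<dots> = (d + c) * card S - (\<Sum>A\<in>W. (1 + x A)\<^sup>2 * e A - (d + c) * (x A)\<^sup>2)"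
    unfolding S_to_W S_internal
    by (simp add: sum.distrib sum_subtractf sum_distrib_left power2_eq_square algebra_simps)
  finally show ?thesis
    by (simp add: W_def e_def)
qed

lemma nbhd_Diff_component:
  assumes "S \<subseteq> V" and "C \<in> components_in E (V - S)" and "A \<in> C"
  shows "nbhd V E A - C = nbhd V E A \<inter> S"
proof -
  have "C \<subseteq> V - S"
    using assms(2) by (rule components_in_subset)
  moreover have "B \<in> C" if "B \<in> nbhd V E A" "B \<notin> S" for B
    using components_in_closed[OF symp_adj assms(2,3), of B] that by (simp add: nbhd_def)
  ultimately show ?thesis
    using nbhd_subset[of A] by blast
qed

lemma card_Diff_component:
  assumes "2 \<le> num_components E (V - S)" and "C \<in> components_in E (V - S)"
  shows "d + 1 \<le> card (V - C)"
proof -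
  have "components_in E (V - S) \<noteq> {C}"
    using assms by (auto simp: num_components_def)
  then obtain C' where C': "C' \<in> components_in E (V - S)" "C' \<noteq> C"
    using assms(2) by blast
  then obtain A where "A \<in> C'" "A \<in> V - S"
    by (auto simp: components_in_eq_image intro: component_of_self)
  have "C \<subseteq> V - S"
    using assms(2) by (rule components_in_subset)
  have "insert A (nbhd V E A) \<subseteq> V - C"
  proof -
    have "A \<notin> C"
      using components_in_disjoint[OF symp_adj assms(2) C'(1)] C'(2) \<open>A \<in> C'\<close> by blast
    moreover have "B \<notin> C" if "B \<in> nbhd V E A" for B
    proof
      assume "B \<in> C"
      then have "A \<in> C"
        using components_in_closed[OF symp_adj assms(2) \<open>B \<in> C\<close> \<open>A \<in> V - S\<close>] that adj_sym
        by (auto simp: nbhd_def)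
      with \<open>A \<notin> C\<close> show False ..
    qed
    ultimately show ?thesis
      using \<open>A \<in> V - S\<close> nbhd_subset by blast
  qed
  moreover have "card (insert A (nbhd V E A)) = d + 1"
    using adj_irrefl[of A] \<open>A \<in> V - S\<close> card_nbhd finite_nbhd by (simp add: nbhd_def)
  ultimately show ?thesis
    by (metis card_mono finite_Diff finite_vertices)
qed

(* The hypothesis psd says that the least adjacency eigenvalue is at least -c. *)
lemma components_test_vector_bound:
  fixes a :: "'a set \<Rightarrow> real" and c :: real
  assumes "S \<subseteq> V"
    and psd: "\<And>x :: 'a \<Rightarrow> real. 0 \<le> (\<Sum>(A, B)\<in>arcs V E. x A * x B) + c * (\<Sum>A\<in>V. (x A)\<^sup>2)"
  shows "(\<Sum>C\<in>components_in E (V - S). (1 + a C)\<^sup>2 * cut_size V E C - (d + c) * card C * (a C)\<^sup>2)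
    \<le> (d + c) * card S"
proof -
  let ?comps = "components_in E (V - S)"
  define x where "x A = (if A \<in> S then -1 else a (component_of E (V - S) A))" for A
  define h where "h A = (1 + x A)\<^sup>2 * card (nbhd V E A \<inter> S) - (d + c) * (x A)\<^sup>2" for A
  have fin: "finite (V - S)"
    using finite_vertices by simp
  have x_const: "x B = x A" if "A \<in> V - S" "B \<in> V - S" "E A B" for A B
    using component_of_eq[OF symp_adj component_of_adj[of A "V - S" B E, OF that]] that
    by (simp add: x_def)
  have sum_h: "(\<Sum>A\<in>V - S. h A) \<le> (d + c) * card S"
    using psd[of x] quadratic_form_cut_vector[OF assms(1), of x c] x_const
    by (simp add: x_def h_def)
  have "(\<Sum>A\<in>V - S. h A) = (\<Sum>C\<in>?comps. \<Sum>A\<in>C. h A)"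
    by (rule sum_components_in[OF symp_adj fin])
  also have "\<dots> = (\<Sum>C\<in>?comps. (1 + a C)\<^sup>2 * cut_size V E C - (d + c) * card C * (a C)\<^sup>2)"
  proof (rule sum.cong[OF refl])
    fix C assume C: "C \<in> ?comps"
    have "A \<notin> S" if "A \<in> C" for A
      using components_in_subset[OF C] that by blast
    then have "h A = (1 + a C)\<^sup>2 * card (nbhd V E A - C) - (d + c) * (a C)\<^sup>2" if "A \<in> C" for A
      using that component_of_eq_components_in[OF symp_adj C that] nbhd_Diff_component[OF assms(1) C that]
      by (simp add: h_def x_def)
    then show "(\<Sum>A\<in>C. h A) = (1 + a C)\<^sup>2 * cut_size V E C - (d + c) * card C * (a C)\<^sup>2"
      by (simp add: cut_size_def sum_subtractf sum_distrib_left)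
  qed
  finally show ?thesis
    using sum_h by simp
qed

end

section \<open>Kneser graphs\<close>

lemma card_disjoint_unions:
  assumes "finite P" and "finite Q" and "P \<inter> Q = {}"
  shows "card {S \<union> T | S T. S \<subseteq> P \<and> card S = a \<and> T \<subseteq> Q \<and> card T = b}
    = (card P choose a) * (card Q choose b)"
proof -
  let ?PQ = "{S. S \<subseteq> P \<and> card S = a} \<times> {T. T \<subseteq> Q \<and> card T = b}"
  have "{S \<union> T | S T. S \<subseteq> P \<and> card S = a \<and> T \<subseteq> Q \<and> card T = b} = (\<lambda>(S, T). S \<union> T) ` ?PQ"
    by auto
  moreover have "inj_on (\<lambda>(S, T). S \<union> T) ?PQ"
  proof (rule inj_onI)
    fix y z assume "y \<in> ?PQ" "z \<in> ?PQ" "(\<lambda>(S, T). S \<union> T) y = (\<lambda>(S, T). S \<union> T) z"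
    moreover have "fst w = (\<lambda>(S, T). S \<union> T) w \<inter> P" "snd w = (\<lambda>(S, T). S \<union> T) w - P"
      if "w \<in> ?PQ" for w
      using that assms(3) by auto
    ultimately show "y = z"
      by (intro prod_eqI) simp_all
  qed
  ultimately show ?thesis
    using assms by (simp add: card_image card_cartesian_product n_subsets)
qed

lemma finite_kneser_vertices: "finite (kneser_vertices n k)"
proof -
  have "kneser_vertices n k \<subseteq> Pow {1..n}"
    by (auto simp: kneser_vertices_def)
  then show ?thesis
    by (rule finite_subset) simp
qed

lemma card_kneser_vertices: "card (kneser_vertices n k) = n choose k"
  using n_subsets[of "{1..n}" k] by (simp add: kneser_vertices_def)

lemma kneser_vertex_finite: "A \<in> kneser_vertices n k \<Longrightarrow> finite A"
  by (auto simp: kneser_vertices_def intro: finite_subset)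

lemma kneser_nbhd_eq:
  "nbhd (kneser_vertices n k) kneser_adj A = {B. B \<subseteq> {1..n} - A \<and> card B = k}"
  by (auto simp: nbhd_def kneser_vertices_def kneser_adj_def)

lemma card_kneser_nbhd:
  assumes "A \<in> kneser_vertices n k"
  shows "card (nbhd (kneser_vertices n k) kneser_adj A) = (n - k) choose k"
proof -
  have "card ({1..n} - A) = n - k"
    using assms kneser_vertex_finite[OF assms] by (simp add: kneser_vertices_def card_Diff_subset)
  then show ?thesis
    by (simp add: kneser_nbhd_eq n_subsets)
qed

lemma regular_graph_kneser:
  assumes "0 < k"
  shows "regular_graph (kneser_vertices n k) kneser_adj ((n - k) choose k)"
proof
  show "\<not> kneser_adj A A" if "A \<in> kneser_vertices n k" for A
    using that assms by (auto simp: kneser_vertices_def kneser_adj_def)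
qed (auto simp: finite_kneser_vertices card_kneser_nbhd kneser_adj_def)

lemma kneser_nbhd_intersecting:
  assumes "n < 3 * k" and "A \<in> kneser_vertices n k"
    and "B \<in> nbhd (kneser_vertices n k) kneser_adj A" and "C \<in> nbhd (kneser_vertices n k) kneser_adj A"
  shows "B \<inter> C \<noteq> {}"
proof
  assume "B \<inter> C = {}"
  have B: "B \<subseteq> {1..n} - A" "card B = k" and C: "C \<subseteq> {1..n} - A" "card C = k"
    using assms(3,4) by (auto simp: kneser_nbhd_eq)
  have "finite B" "finite C"
    using B C finite_subset by (metis finite_Diff finite_atLeastAtMost)+
  then have "card (B \<union> C) = 2 * k"
    using \<open>B \<inter> C = {}\<close> B C by (simp add: card_Un_disjoint)
  moreover have "card (B \<union> C) \<le> card ({1..n} - A)"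
    using B C by (intro card_mono) auto
  moreover have "card ({1..n} - A) = n - k"
    using assms(2) kneser_vertex_finite[OF assms(2)] by (simp add: kneser_vertices_def card_Diff_subset)
  ultimately show False
    using assms(1) by linarith
qed

lemma kneser_common_nbhd_eq:
  "nbhd (kneser_vertices n k) kneser_adj A \<inter> nbhd (kneser_vertices n k) kneser_adj B
    = {C. C \<subseteq> {1..n} - (A \<union> B) \<and> card C = k}"
  by (auto simp: kneser_nbhd_eq)

lemma card_kneser_common_nbhd_le:
  assumes "A \<in> kneser_vertices n k" and "B \<in> kneser_vertices n k" and "A \<noteq> B"
  shows "card (nbhd (kneser_vertices n k) kneser_adj A \<inter> nbhd (kneser_vertices n k) kneser_adj B)
    \<le> (n - k - 1) choose k"
proof -
  have fin: "finite A" "finite B"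
    using assms kneser_vertex_finite by blast+
  have "\<not> B \<subseteq> A"
    using assms card_subset_eq[OF fin(1)] by (auto simp: kneser_vertices_def)
  then obtain b where "b \<in> B" "b \<notin> A"
    by blast
  then have "card (insert b A) \<le> card (A \<union> B)"
    using fin by (intro card_mono) auto
  then have "k + 1 \<le> card (A \<union> B)"
    using \<open>b \<notin> A\<close> fin assms(1) by (simp add: kneser_vertices_def)
  moreover have "A \<union> B \<subseteq> {1..n}"
    using assms by (auto simp: kneser_vertices_def)
  ultimately have "card ({1..n} - (A \<union> B)) \<le> n - k - 1"
    using fin by (simp add: card_Diff_subset)
  then show ?thesis
    unfolding kneser_common_nbhd_eq by (simp add: n_subsets binomial_right_mono)
qed

lemma kneser_common_nbhd_nonempty:
  assumes "A \<in> kneser_vertices n k" and "B \<in> kneser_vertices n k" and "3 * k \<le> n + card (A \<inter> B)"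
  shows "nbhd (kneser_vertices n k) kneser_adj A \<inter> nbhd (kneser_vertices n k) kneser_adj B \<noteq> {}"
proof -
  have fin: "finite A" "finite B"
    using assms kneser_vertex_finite by blast+
  have "card (A \<union> B) + card (A \<inter> B) = 2 * k"
    using card_Un_Int[OF fin] assms(1,2) by (simp add: kneser_vertices_def)
  moreover have "A \<union> B \<subseteq> {1..n}"
    using assms by (auto simp: kneser_vertices_def)
  ultimately have "k \<le> card ({1..n} - (A \<union> B))"
    using fin assms(3) by (simp add: card_Diff_subset)
  then obtain C where "C \<subseteq> {1..n} - (A \<union> B)" "card C = k"
    by (meson obtain_subset_with_card_n)
  then show ?thesis
    unfolding kneser_common_nbhd_eq by blast
qed

lemma permutes_map_disjoint_pair:
  assumes "finite U" and "A\<^sub>0 \<union> B\<^sub>0 \<subseteq> U" and "A \<union> B \<subseteq> U"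
    and "A\<^sub>0 \<inter> B\<^sub>0 = {}" and "A \<inter> B = {}" and "card A\<^sub>0 = card A" and "card B\<^sub>0 = card B"
  obtains p where "p permutes U" and "p ` A\<^sub>0 = A" and "p ` B\<^sub>0 = B"
proof -
  define R\<^sub>0 where "R\<^sub>0 = U - (A\<^sub>0 \<union> B\<^sub>0)"
  define R where "R = U - (A \<union> B)"
  have fin: "finite A\<^sub>0" "finite B\<^sub>0" "finite A" "finite B" "finite R\<^sub>0" "finite R"
    using assms(1-3) finite_subset by (auto simp: R\<^sub>0_def R_def)
  have "card R\<^sub>0 = card R"
    using assms fin by (simp add: R\<^sub>0_def R_def card_Diff_subset card_Un_disjoint)
  then obtain h where h: "bij_betw h R\<^sub>0 R"
    using fin finite_same_card_bij by blast
  obtain f where f: "bij_betw f A\<^sub>0 A"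
    using fin assms(6) finite_same_card_bij by blast
  obtain g where g: "bij_betw g B\<^sub>0 B"
    using fin assms(7) finite_same_card_bij by blast
  define p where "p x = (if x \<in> A\<^sub>0 then f x else if x \<in> B\<^sub>0 then g x else h x)" for x
  have "bij_betw p (A\<^sub>0 \<union> (B\<^sub>0 \<union> R\<^sub>0)) (A \<union> (B \<union> R))"
    unfolding p_def using assms(4,5)
    by (intro bij_betw_disjoint_Un f bij_betw_disjoint_Un g h) (auto simp: R\<^sub>0_def R_def)
  moreover have "A\<^sub>0 \<union> (B\<^sub>0 \<union> R\<^sub>0) = U" "A \<union> (B \<union> R) = U"
    using assms(2,3) by (auto simp: R\<^sub>0_def R_def)
  ultimately have bij: "bij_betw p U U"
    by simp
  define q where "q x = (if x \<in> U then p x else x)" for x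
  have "q permutes U"
    using bij by (intro bij_imp_permutes) (auto simp: q_def cong: bij_betw_cong)
  moreover have "q ` A\<^sub>0 = A" "q ` B\<^sub>0 = B"
    using f g assms(2,4) by (auto simp: q_def p_def bij_betw_def)
  ultimately show ?thesis
    using that by blast
qed

lemma kneser_arc_permutation:
  assumes "(A\<^sub>0, B\<^sub>0) \<in> arcs (kneser_vertices n k) kneser_adj" and "(A, B) \<in> arcs (kneser_vertices n k) kneser_adj"
  obtains p where "p permutes {1..n}" and "p ` A\<^sub>0 = A" and "p ` B\<^sub>0 = B"
  by (rule permutes_map_disjoint_pair[of "{1..n}" A\<^sub>0 B\<^sub>0 A B])
    (use assms that in \<open>auto simp: arcs_def kneser_vertices_def kneser_adj_def\<close>)

lemma kneser_arc_image:
  assumes "p permutes {1..n}" and "(A, B) \<in> arcs (kneser_vertices n k) kneser_adj"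
  shows "(p ` A, p ` B) \<in> arcs (kneser_vertices n k) kneser_adj"
proof -
  have "inj p"
    using assms(1) by (rule permutes_inj)
  then have "card (p ` X) = card X" "p ` X \<inter> p ` Y = p ` (X \<inter> Y)" for X Y
    by (simp_all add: card_image inj_on_subset image_Int)
  moreover have "p ` X \<subseteq> {1..n}" if "X \<subseteq> {1..n}" for X
    using that permutes_image[OF assms(1)] by blast
  ultimately show ?thesis
    using assms(2) by (simp add: arcs_def kneser_vertices_def kneser_adj_def)
qed

lemma kneser_sum_permutations:
  fixes G :: "nat set \<Rightarrow> nat set \<Rightarrow> real"
  assumes "(A\<^sub>0, B\<^sub>0) \<in> arcs (kneser_vertices n k) kneser_adj"
  shows "card (arcs (kneser_vertices n k) kneser_adj) * (\<Sum>p | p permutes {1..n}. G (p ` A\<^sub>0) (p ` B\<^sub>0))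
    = fact n * (\<Sum>(A, B)\<in>arcs (kneser_vertices n k) kneser_adj. G A B)"
proof -
  let ?D = "arcs (kneser_vertices n k) kneser_adj" and ?P = "{p. p permutes {1..n}}"
  have orbit: "(\<Sum>p\<in>?P. G (p ` A) (p ` B)) = (\<Sum>p\<in>?P. G (p ` A\<^sub>0) (p ` B\<^sub>0))" if AB: "(A, B) \<in> ?D" for A B
  proof -
    obtain t where t: "t permutes {1..n}" "t ` A\<^sub>0 = A" "t ` B\<^sub>0 = B"
      using kneser_arc_permutation[OF assms AB] .
    have "(\<Sum>p\<in>?P. G (p ` A\<^sub>0) (p ` B\<^sub>0)) = (\<Sum>p\<in>?P. G ((p \<circ> t) ` A\<^sub>0) ((p \<circ> t) ` B\<^sub>0))"
      by (rule sum_permutations_compose_right[OF t(1)])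
    also have "\<dots> = (\<Sum>p\<in>?P. G (p ` A) (p ` B))"
      by (simp only: image_comp[symmetric] t(2,3))
    finally show ?thesis
      by (rule sym)
  qed
  have invariant: "(\<Sum>(A, B)\<in>?D. G (p ` A) (p ` B)) = (\<Sum>(A, B)\<in>?D. G A B)" if "p \<in> ?P" for p
  proof (rule sum.reindex_bij_witness[where j = "\<lambda>(A, B). (p ` A, p ` B)"
        and i = "\<lambda>(A, B). (inv p ` A, inv p ` B)"])
    have p: "p permutes {1..n}" "inv p permutes {1..n}"
      using that permutes_inv by auto
    show "(\<lambda>(A, B). (inv p ` A, inv p ` B)) ((\<lambda>(A, B). (p ` A, p ` B)) z) = z"
      "(\<lambda>(A, B). (p ` A, p ` B)) ((\<lambda>(A, B). (inv p ` A, inv p ` B)) z) = z" for z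
      using permutes_inv_o[OF p(1)] by (auto simp: image_comp split: prod.split)
    show "(\<lambda>(A, B). (p ` A, p ` B)) z \<in> ?D" "(\<lambda>(A, B). (inv p ` A, inv p ` B)) z \<in> ?D" if "z \<in> ?D" for z
      using kneser_arc_image[OF p(1)] kneser_arc_image[OF p(2)] that by (auto split: prod.split)
  qed auto
  have "card ?D * (\<Sum>p\<in>?P. G (p ` A\<^sub>0) (p ` B\<^sub>0)) = (\<Sum>(A, B)\<in>?D. \<Sum>p\<in>?P. G (p ` A) (p ` B))"
    using orbit by (simp add: case_prod_beta)
  also have "\<dots> = (\<Sum>p\<in>?P. \<Sum>(A, B)\<in>?D. G (p ` A) (p ` B))"
    unfolding case_prod_beta by (rule sum.swap)
  also have "\<dots> = card ?P * (\<Sum>(A, B)\<in>?D. G A B)"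
    using invariant by simp
  also have "card ?P = fact n"
    by (simp add: card_permutations)
  finally show ?thesis
    by simp
qed

lemma card_kneser_star:
  assumes "i \<in> {1..n}"
  shows "card {A \<in> kneser_vertices n (Suc k). i \<in> A} = (n - 1) choose k"
proof -
  let ?T = "{B. B \<subseteq> {1..n} - {i} \<and> card B = k}"
  have "{A \<in> kneser_vertices n (Suc k). i \<in> A} = insert i ` ?T"
  proof (intro equalityI subsetI)
    fix A assume A: "A \<in> {A \<in> kneser_vertices n (Suc k). i \<in> A}"
    then have "A - {i} \<in> ?T"
      using kneser_vertex_finite[of A n "Suc k"] by (auto simp: kneser_vertices_def)
    moreover have "A = insert i (A - {i})"
      using A by blast
    ultimately show "A \<in> insert i ` ?T"
      by blast
  next
    fix A assume "A \<in> insert i ` ?T"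
    then obtain B where "B \<in> ?T" "A = insert i B"
      by blast
    moreover have "finite B" "i \<notin> B"
      using \<open>B \<in> ?T\<close> finite_subset by auto
    ultimately show "A \<in> {A \<in> kneser_vertices n (Suc k). i \<in> A}"
      using assms by (auto simp: kneser_vertices_def)
  qed
  moreover have "inj_on (insert i) ?T"
    by (rule inj_onI) (metis Diff_insert_absorb Diff_iff insertI1 mem_Collect_eq subsetD)
  moreover have "card ?T = (n - 1) choose k"
    using assms by (simp add: n_subsets)
  ultimately show ?thesis
    by (simp add: card_image)
qed

section \<open>The Kneser graph K(10,4)\<close>

abbreviation K104 :: "nat set set" where
  "K104 \<equiv> kneser_vertices 10 4"

abbreviation nbhd104 :: "nat set \<Rightarrow> nat set set" where
  "nbhd104 A \<equiv> nbhd K104 kneser_adj A"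

abbreviation cut104 :: "nat set set \<Rightarrow> nat" where
  "cut104 X \<equiv> cut_size K104 kneser_adj X"

interpretation K104: regular_graph K104 kneser_adj 15
  using regular_graph_kneser[of 4 10] by (simp add: numeral_eq_Suc)

(* The Petersen graph is 3-regular, so summing this over its 15 edges gives x^T (A + 2 I) x / 2
   for its adjacency matrix A; this is nonnegative because its least eigenvalue is -2. *)
definition petersen_term :: "real \<Rightarrow> real \<Rightarrow> real" where
  "petersen_term a b = a * b + (a\<^sup>2 + b\<^sup>2) / 3"

lemma petersen_form_nonneg:
  fixes a12 a13 a14 a15 a23 a24 a25 a34 a35 a45 :: real
  shows "0 \<le> petersen_term a12 a34 + petersen_term a12 a35 + petersen_term a12 a45
    + petersen_term a13 a24 + petersen_term a13 a25 + petersen_term a13 a45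
    + petersen_term a14 a23 + petersen_term a14 a25 + petersen_term a14 a35
    + petersen_term a15 a23 + petersen_term a15 a24 + petersen_term a15 a34
    + petersen_term a23 a45 + petersen_term a24 a35 + petersen_term a25 a34"
proof -
  have "petersen_term a12 a34 + petersen_term a12 a35 + petersen_term a12 a45
    + petersen_term a13 a24 + petersen_term a13 a25 + petersen_term a13 a45
    + petersen_term a14 a23 + petersen_term a14 a25 + petersen_term a14 a35
    + petersen_term a15 a23 + petersen_term a15 a24 + petersen_term a15 a34
    + petersen_term a23 a45 + petersen_term a24 a35 + petersen_term a25 a34 =
    (a12 + a13 + a14 + a15 + a23 + a24 + a25 + a34 + a35 + a45)\<^sup>2 / 4
    + ((a23 + a45 - a24 - a35)\<^sup>2 + (a23 + a45 - a25 - a34)\<^sup>2 + (a24 + a35 - a25 - a34)\<^sup>2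
     + (a13 + a45 - a14 - a35)\<^sup>2 + (a13 + a45 - a15 - a34)\<^sup>2 + (a14 + a35 - a15 - a34)\<^sup>2
     + (a12 + a45 - a14 - a25)\<^sup>2 + (a12 + a45 - a15 - a24)\<^sup>2 + (a14 + a25 - a15 - a24)\<^sup>2
     + (a12 + a35 - a13 - a25)\<^sup>2 + (a12 + a35 - a15 - a23)\<^sup>2 + (a13 + a25 - a15 - a23)\<^sup>2
     + (a12 + a34 - a13 - a24)\<^sup>2 + (a12 + a34 - a14 - a23)\<^sup>2 + (a13 + a24 - a14 - a23)\<^sup>2) / 8"
    unfolding petersen_term_def by (simp add: power2_eq_square field_simps)
  also have "\<dots> \<ge> 0"
    by (intro add_nonneg_nonneg divide_nonneg_pos) simp_all
  finally show ?thesis .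
qed

(* The ten unions pair_block i j of two of the blocks {1,2}, ..., {9,10} induce a Petersen
   graph K(5,2) in K(10,4). *)
definition pair_block :: "nat \<Rightarrow> nat \<Rightarrow> nat set" where
  "pair_block i j = {2 * i - 1, 2 * i, 2 * j - 1, 2 * j}"

definition petersen_edges :: "(nat set \<times> nat set) list" where
  "petersen_edges =
    [(pair_block 1 2, pair_block 3 4), (pair_block 1 2, pair_block 3 5), (pair_block 1 2, pair_block 4 5),
     (pair_block 1 3, pair_block 2 4), (pair_block 1 3, pair_block 2 5), (pair_block 1 3, pair_block 4 5),
     (pair_block 1 4, pair_block 2 3), (pair_block 1 4, pair_block 2 5), (pair_block 1 4, pair_block 3 5),
     (pair_block 1 5, pair_block 2 3), (pair_block 1 5, pair_block 2 4), (pair_block 1 5, pair_block 3 4),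
     (pair_block 2 3, pair_block 4 5), (pair_block 2 4, pair_block 3 5), (pair_block 2 5, pair_block 3 4)]"

lemma petersen_edges_arcs: "z \<in> set petersen_edges \<Longrightarrow> z \<in> arcs K104 kneser_adj"
  by (auto simp: petersen_edges_def pair_block_def arcs_def kneser_vertices_def kneser_adj_def)

lemma petersen_edges_form_nonneg: "0 \<le> (\<Sum>(A, B)\<leftarrow>petersen_edges. petersen_term (y A) (y B))"
  unfolding petersen_edges_def by (simp add: add.assoc petersen_form_nonneg[simplified add.assoc])

lemma quadratic_form104_nonneg:
  fixes x :: "nat set \<Rightarrow> real"
  shows "0 \<le> (\<Sum>(A, B)\<in>arcs K104 kneser_adj. x A * x B) + 10 * (\<Sum>A\<in>K104. (x A)\<^sup>2)"
proof -
  let ?D = "arcs K104 kneser_adj" and ?P = "{p. p permutes {1..10::nat}}"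
  define G where "G A B = petersen_term (x A) (x B)" for A B
  have list_sum_swap:
    "(\<Sum>p\<in>?P. \<Sum>(A, B)\<leftarrow>L. G (p ` A) (p ` B)) = (\<Sum>(A, B)\<leftarrow>L. \<Sum>p\<in>?P. G (p ` A) (p ` B))"
    for L :: "(nat set \<times> nat set) list"
    by (induction L) (auto simp: sum.distrib)
  have "0 \<le> (\<Sum>p\<in>?P. \<Sum>(A, B)\<leftarrow>petersen_edges. G (p ` A) (p ` B))"
    unfolding G_def by (intro sum_nonneg petersen_edges_form_nonneg)
  then have "0 \<le> card ?D * (\<Sum>(A, B)\<leftarrow>petersen_edges. \<Sum>p\<in>?P. G (p ` A) (p ` B))"
    unfolding list_sum_swap by simp
  also have "\<dots> = (\<Sum>(A, B)\<leftarrow>petersen_edges. card ?D * (\<Sum>p\<in>?P. G (p ` A) (p ` B)))"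
    by (simp add: sum_list_const_mult[symmetric] o_def split_def)
  also have "\<dots> = (\<Sum>(A, B)\<leftarrow>petersen_edges. fact 10 * (\<Sum>(A, B)\<in>?D. G A B))"
    using kneser_sum_permutations[OF petersen_edges_arcs] by (intro arg_cong[where f = sum_list] map_cong) auto
  also have "\<dots> = 15 * fact 10 * (\<Sum>(A, B)\<in>?D. G A B)"
    by (simp add: petersen_edges_def)
  finally have "0 \<le> (\<Sum>(A, B)\<in>?D. G A B)"
    using fact_gt_zero[where 'a = real, of 10] by (simp add: zero_le_mult_iff)
  also have "(\<Sum>(A, B)\<in>?D. G A B)
      = (\<Sum>(A, B)\<in>?D. x A * x B) + ((\<Sum>(A, B)\<in>?D. (x A)\<^sup>2) + (\<Sum>(A, B)\<in>?D. (x B)\<^sup>2)) / 3"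
    by (simp add: G_def petersen_term_def sum.distrib case_prod_beta add_divide_distrib sum_divide_distrib)
  also have "(\<Sum>(A, B)\<in>?D. (x B)\<^sup>2) = (\<Sum>(A, B)\<in>?D. (x A)\<^sup>2)"
    by (rule K104.sum_arcs_swap)
  also have "(\<Sum>(A, B)\<in>?D. (x A)\<^sup>2) = 15 * (\<Sum>A\<in>K104. (x A)\<^sup>2)"
    by (simp add: K104.sum_arcs_eq K104.card_nbhd sum_distrib_left)
  finally show ?thesis
    by simp
qed

lemma finite_subset_K104: "X \<subseteq> K104 \<Longrightarrow> finite X"
  using finite_subset finite_kneser_vertices by blast

lemma card_K104: "card K104 = 210"
  by (simp add: card_kneser_vertices numeral_eq_Suc)

lemma nbhd104_intersecting: "A \<in> K104 \<Longrightarrow> B \<in> nbhd104 A \<Longrightarrow> C \<in> nbhd104 A \<Longrightarrow> B \<inter> C \<noteq> {}"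
  by (rule kneser_nbhd_intersecting) simp_all

lemma card_common_nbhd104_le:
  "A \<in> K104 \<Longrightarrow> B \<in> K104 \<Longrightarrow> A \<noteq> B \<Longrightarrow> card (nbhd104 A \<inter> nbhd104 B) \<le> 5"
  using card_kneser_common_nbhd_le[of A 10 4 B] by (simp add: numeral_eq_Suc)

lemma common_nbhd104_nonempty:
  "A \<in> K104 \<Longrightarrow> B \<in> K104 \<Longrightarrow> 2 \<le> card (A \<inter> B) \<Longrightarrow> nbhd104 A \<inter> nbhd104 B \<noteq> {}"
  by (rule kneser_common_nbhd_nonempty) simp_all

lemma card_nbhd104_meeting_twice:
  assumes v: "v \<in> K104" and B: "B \<in> K104" and "card (B \<inter> v) = 1"
  shows "9 \<le> card {C \<in> nbhd104 B. 2 \<le> card (C \<inter> v)}"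
proof -
  have sv: "v \<subseteq> {1..10}" "card v = 4" and sB: "B \<subseteq> {1..10}" "card B = 4"
    using v B by (simp_all add: kneser_vertices_def)
  have fin: "finite v" "finite B"
    using sv sB finite_subset by blast+
  define P where "P = v - B"
  define Q where "Q = {1..10::nat} - (B \<union> v)"
  have "card P = 3"
    using card_Diff_subset_Int[of v B] fin sv assms(3) by (simp add: P_def Int_commute)
  moreover have "card Q = 3"
  proof -
    have "card (B \<union> v) = 7"
      using card_Un_Int[OF fin(2) fin(1)] sv sB assms(3) by simp
    then show ?thesis
      using sv sB fin by (simp add: Q_def card_Diff_subset)
  qed
  moreover have "finite P" "finite Q" "P \<inter> Q = {}"
    using fin by (auto simp: P_def Q_def)
  ultimately have "card {S \<union> T | S T. S \<subseteq> P \<and> card S = 2 \<and> T \<subseteq> Q \<and> card T = 2} = 9"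
    by (simp add: card_disjoint_unions numeral_eq_Suc)
  moreover have "{S \<union> T | S T. S \<subseteq> P \<and> card S = 2 \<and> T \<subseteq> Q \<and> card T = 2}
      \<subseteq> {C \<in> nbhd104 B. 2 \<le> card (C \<inter> v)}"
  proof clarify
    fix S T assume S: "S \<subseteq> P" "card S = 2" and T: "T \<subseteq> Q" "card T = 2"
    have "finite S" "finite T" "S \<inter> T = {}"
      using S T \<open>finite P\<close> \<open>finite Q\<close> \<open>P \<inter> Q = {}\<close> finite_subset by blast+
    then have "card (S \<union> T) = 4"
      using S T by (simp add: card_Un_disjoint)
    moreover have "S \<union> T \<subseteq> {1..10}" "B \<inter> (S \<union> T) = {}"
      using S T sv by (auto simp: P_def Q_def)
    moreover have "card S \<le> card ((S \<union> T) \<inter> v)"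
      using S fin by (intro card_mono) (auto simp: P_def)
    ultimately show "S \<union> T \<in> nbhd104 B \<and> 2 \<le> card ((S \<union> T) \<inter> v)"
      using S by (simp add: nbhd_def kneser_vertices_def kneser_adj_def)
  qed
  ultimately show ?thesis
    using K104.finite_nbhd by (metis (no_types, lifting) card_mono finite_subset mem_Collect_eq subsetI)
qed

lemma sum_card_nbhd104_Int_le:
  assumes "v \<in> K104" and "Z \<subseteq> nbhd104 v" and "Y \<subseteq> K104 - {v}"
  shows "(\<Sum>z\<in>Z. card (nbhd104 z \<inter> Y)) \<le> 5 * card Y"
proof -
  have "(\<Sum>z\<in>Z. card (nbhd104 z \<inter> Y)) = (\<Sum>y\<in>Y. card (nbhd104 y \<inter> Z))"
    using assms K104.nbhd_subset by (intro K104.card_nbhd_swap) auto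
  also have "\<dots> \<le> (\<Sum>y\<in>Y. 5)"
  proof (rule sum_mono)
    fix y assume "y \<in> Y"
    then have "card (nbhd104 y \<inter> Z) \<le> card (nbhd104 y \<inter> nbhd104 v)"
      using assms(2) by (intro card_mono) (auto simp: K104.finite_nbhd)
    also have "\<dots> \<le> 5"
      using \<open>y \<in> Y\<close> assms(1,3) by (intro card_common_nbhd104_le) auto
    finally show "card (nbhd104 y \<inter> Z) \<le> 5" .
  qed
  finally show ?thesis
    by simp
qed

lemma card_nbhd104_outside_ge:
  assumes "v \<in> K104" and "z \<in> nbhd104 v" and "v \<in> X"
  shows "14 \<le> card (nbhd104 z - X) + card (nbhd104 z \<inter> (X - nbhd104 v - {v}))"
proof -
  have zK: "z \<in> K104"
    using assms(2) K104.nbhd_subset by blast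
  have "nbhd104 z \<inter> nbhd104 v = {}"
    using nbhd104_intersecting[OF assms(1,2)] by (auto simp: nbhd_def kneser_adj_def)
  then have "nbhd104 z \<inter> X \<subseteq> insert v (nbhd104 z \<inter> (X - nbhd104 v - {v}))"
    by blast
  then have "card (nbhd104 z \<inter> X) \<le> Suc (card (nbhd104 z \<inter> (X - nbhd104 v - {v})))"
    using K104.finite_nbhd card_mono[of "insert v (nbhd104 z \<inter> (X - nbhd104 v - {v}))" "nbhd104 z \<inter> X"]
    by (simp add: card_insert_if split: if_splits)
  then show ?thesis
    using K104.card_nbhd_Int_Diff[OF zK, of X] by simp
qed

lemma cut104_ge_38_medium:
  assumes X: "X \<subseteq> K104" and "14 \<le> card X" and "card X \<le> 42"
  shows "38 \<le> cut104 X"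
proof (rule ccontr)
  assume "\<not> 38 \<le> cut104 X"
  then have cut: "cut104 X \<le> 37"
    by simp
  have fX: "finite X"
    using X by (rule finite_subset_K104)
  obtain v where v: "v \<in> X" "card (nbhd104 v - X) \<le> 2"
    using exists_few_outside_nbhd[of K104 kneser_adj X 2] cut \<open>14 \<le> card X\<close> by auto
  have vK: "v \<in> K104"
    using v X by blast
  define Z where "Z = nbhd104 v \<inter> X"
  define Y where "Y = X - Z - {v}"
  have "13 \<le> card Z"
    using K104.card_nbhd_Int_Diff[OF vK, of X] v by (simp add: Z_def)
  have "v \<notin> Z"
    using K104.adj_irrefl[OF vK] by (simp add: Z_def nbhd_def)
  moreover have "insert v Z \<subseteq> X" "finite Z"
    using v fX by (auto simp: Z_def)
  moreover have "Y = X - insert v Z"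
    by (auto simp: Y_def)
  ultimately have card_X: "card Y + card Z + 1 = card X"
    using card_mono[OF fX \<open>insert v Z \<subseteq> X\<close>] by (simp add: card_Diff_subset)
  have "Y \<subseteq> K104" "Z \<subseteq> K104"
    using X by (auto simp: Y_def Z_def)
  have "14 \<le> card (nbhd104 z - X) + card (nbhd104 z \<inter> Y)" if "z \<in> Z" for z
  proof -
    have "Y = X - nbhd104 v - {v}"
      by (auto simp: Y_def Z_def)
    then show ?thesis
      using card_nbhd104_outside_ge[OF vK _ v(1), of z] that by (simp add: Z_def)
  qed
  have "(\<Sum>z\<in>Z. card (nbhd104 z - X)) \<le> cut104 X"
    unfolding cut_size_def by (rule sum_mono2[OF fX]) (auto simp: Z_def)
  moreover have "(\<Sum>z\<in>Z. card (nbhd104 z \<inter> Y)) \<le> 5 * card Y"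
    using \<open>Y \<subseteq> K104\<close> by (intro sum_card_nbhd104_Int_le[OF vK]) (auto simp: Y_def Z_def)
  moreover have "14 * card Z \<le> (\<Sum>z\<in>Z. card (nbhd104 z - X)) + (\<Sum>z\<in>Z. card (nbhd104 z \<inter> Y))"
    using sum_mono[of Z "\<lambda>_. 14" "\<lambda>z. card (nbhd104 z - X) + card (nbhd104 z \<inter> Y)"]
      \<open>\<And>z. z \<in> Z \<Longrightarrow> 14 \<le> card (nbhd104 z - X) + card (nbhd104 z \<inter> Y)\<close>
    by (simp add: sum.distrib)
  ultimately show False
    using cut card_X \<open>13 \<le> card Z\<close> \<open>card X \<le> 42\<close> by linarith
qed

lemma card_nbhd104_Int_closed_nbhd_pos:
  assumes "v \<in> K104" and "nbhd104 v \<subseteq> X" and "B \<in> K104" and "2 \<le> card (B \<inter> v)"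
  shows "1 \<le> card (nbhd104 B \<inter> X)"
proof -
  obtain C where "C \<in> nbhd104 v" "C \<in> nbhd104 B"
    using common_nbhd104_nonempty[OF assms(1,3)] assms(4) by (auto simp: Int_commute)
  then have "nbhd104 B \<inter> X \<noteq> {}"
    using assms(2) by blast
  then show ?thesis
    using K104.finite_nbhd by (simp add: Suc_le_eq card_gt_0_iff)
qed

lemma card_nbhd104_meeting_twice_split:
  assumes "v \<in> K104" and "B \<in> K104" and "card (B \<inter> v) = 1"
  shows "9 \<le> card (nbhd104 B \<inter> X) + card (nbhd104 B \<inter> {w \<in> K104 - X. 2 \<le> card (w \<inter> v)})"
proof -
  have "{C \<in> nbhd104 B. 2 \<le> card (C \<inter> v)}
      \<subseteq> (nbhd104 B \<inter> X) \<union> (nbhd104 B \<inter> {w \<in> K104 - X. 2 \<le> card (w \<inter> v)})"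
    using K104.nbhd_subset by auto
  then have "card {C \<in> nbhd104 B. 2 \<le> card (C \<inter> v)}
      \<le> card (nbhd104 B \<inter> X) + card (nbhd104 B \<inter> {w \<in> K104 - X. 2 \<le> card (w \<inter> v)})"
    by (meson K104.finite_nbhd card_Un_le card_mono finite_Int finite_UnI order_trans)
  then show ?thesis
    using card_nbhd104_meeting_twice[OF assms] by linarith
qed

lemma card_Diff_le_98_if_closed_nbhd:
  assumes X: "X \<subseteq> K104" and "v \<in> X" and nbhd_v: "nbhd104 v \<subseteq> X" and cut: "cut104 X \<le> 37"
  shows "card (K104 - X) \<le> 98"
proof -
  define R where "R = K104 - X"
  define R2 where "R2 = {w \<in> R. 2 \<le> card (w \<inter> v)}"
  define R3 where "R3 = {w \<in> R. card (w \<inter> v) = 1}"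
  have vK: "v \<in> K104"
    using assms by blast
  have "R \<subseteq> K104" "finite R"
    using finite_kneser_vertices by (auto simp: R_def)
  have R_split: "R = R2 \<union> R3"
  proof -
    have "1 \<le> card (w \<inter> v)" if "w \<in> R" for w
    proof -
      have "w \<inter> v \<noteq> {}"
        using that nbhd_v by (auto simp: R_def nbhd_def kneser_adj_def)
      then show ?thesis
        using that kneser_vertex_finite by (auto simp: R_def Suc_le_eq card_gt_0_iff)
    qed
    then show ?thesis
      by (force simp: R2_def R3_def)
  qed
  have disj: "R2 \<inter> R3 = {}" and fin: "finite R2" "finite R3" and sub: "R2 \<subseteq> K104" "R3 \<subseteq> K104"
    using \<open>finite R\<close> \<open>R \<subseteq> K104\<close> by (auto simp: R2_def R3_def)
  have "cut104 X = (\<Sum>B\<in>R. card (nbhd104 B \<inter> X))"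
    using K104.cut_size_eq[OF X] K104.card_nbhd_swap[OF X \<open>R \<subseteq> K104\<close>] by (simp add: R_def)
  also have "\<dots> = (\<Sum>B\<in>R2. card (nbhd104 B \<inter> X)) + (\<Sum>B\<in>R3. card (nbhd104 B \<inter> X))"
    unfolding R_split by (rule sum.union_disjoint[OF fin disj])
  finally have cut_split: "cut104 X = (\<Sum>B\<in>R2. card (nbhd104 B \<inter> X)) + (\<Sum>B\<in>R3. card (nbhd104 B \<inter> X))" .
  have "card R2 \<le> (\<Sum>B\<in>R2. card (nbhd104 B \<inter> X))"
  proof -
    have "(\<Sum>B\<in>R2. 1) \<le> (\<Sum>B\<in>R2. card (nbhd104 B \<inter> X))"
      using sub(1) by (intro sum_mono card_nbhd104_Int_closed_nbhd_pos[OF vK nbhd_v]) (auto simp: R2_def)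
    then show ?thesis
      by simp
  qed
  moreover have "9 * card R3 \<le> (\<Sum>B\<in>R3. card (nbhd104 B \<inter> X)) + 15 * card R2"
  proof -
    have "9 \<le> card (nbhd104 B \<inter> X) + card (nbhd104 B \<inter> R2)" if "B \<in> R3" for B
      using card_nbhd104_meeting_twice_split[OF vK, of B X] that sub by (auto simp: R2_def R3_def R_def Int_commute)
    then have "(\<Sum>B\<in>R3. 9) \<le> (\<Sum>B\<in>R3. card (nbhd104 B \<inter> X) + card (nbhd104 B \<inter> R2))"
      by (rule sum_mono)
    then have "9 * card R3 \<le> (\<Sum>B\<in>R3. card (nbhd104 B \<inter> X)) + (\<Sum>B\<in>R3. card (nbhd104 B \<inter> R2))"
      by (simp add: sum.distrib)
    moreover have "(\<Sum>B\<in>R3. card (nbhd104 B \<inter> R2)) \<le> 15 * card R2"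
      by (rule K104.sum_card_nbhd_Int_le[OF sub])
    ultimately show ?thesis
      by linarith
  qed
  moreover have "card R = card R2 + card R3"
    unfolding R_split by (rule card_Un_disjoint[OF fin disj])
  ultimately show ?thesis
    using cut cut_split by (simp add: R_def)
qed

lemma cut104_ge_38:
  assumes X: "X \<subseteq> K104" and "14 \<le> card X" and "14 \<le> card (K104 - X)"
  shows "38 \<le> cut104 X"
proof (rule ccontr)
  assume "\<not> 38 \<le> cut104 X"
  then have cut: "cut104 X \<le> 37" "cut104 (K104 - X) \<le> 37"
    using K104.cut_size_complement[OF X] by simp_all
  have "K104 - (K104 - X) = X"
    using X by blast
  have total: "card X + card (K104 - X) = 210"
    using X card_K104 finite_kneser_vertices by (metis card_Diff_subset finite_subset le_add_diff_inverse card_mono)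
  show False
  proof (cases "card X \<le> 42 \<or> card (K104 - X) \<le> 42")
    case True
    then show False
      using cut104_ge_38_medium[OF X] cut104_ge_38_medium[of "K104 - X"] cut assms(2,3) by auto
  next
    case False
    obtain v where "v \<in> X" "nbhd104 v \<subseteq> X"
      using K104.exists_closed_nbhd[of X] cut False by fastforce
    then have "card (K104 - X) \<le> 98"
      using card_Diff_le_98_if_closed_nbhd[OF X] cut by blast
    moreover obtain w where "w \<in> K104 - X" "nbhd104 w \<subseteq> K104 - X"
      using K104.exists_closed_nbhd[of "K104 - X"] cut False by fastforce
    then have "card (K104 - (K104 - X)) \<le> 98"
      using card_Diff_le_98_if_closed_nbhd[of "K104 - X"] cut by blast
    ultimately show False
      using total \<open>K104 - (K104 - X) = X\<close> by simp
  qed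
qed

lemma cut104_component_bound:
  assumes X: "X \<subseteq> K104" and "1 \<le> card X" and "14 \<le> card (K104 - X)"
  shows "75 * card X \<le> cut104 X * (2 * card X + 3)"
    and "2 \<le> card X \<Longrightarrow> 75 * card X < cut104 X * (2 * card X + 3)"
proof -
  let ?m = "card X"
  have "75 * ?m \<le> cut104 X * (2 * ?m + 3) \<and> (2 \<le> ?m \<longrightarrow> 75 * ?m < cut104 X * (2 * ?m + 3))"
  proof (cases "14 \<le> ?m")
    case True
    then have "38 * (2 * ?m + 3) \<le> cut104 X * (2 * ?m + 3)"
      using mult_right_mono[OF cut104_ge_38[OF X True assms(3)]] by blast
    moreover have "75 * ?m < 38 * (2 * ?m + 3)"
      by simp
    ultimately show ?thesis
      by linarith
  next
    case False
    have "?m * (16 - ?m) * (2 * ?m + 3) \<le> cut104 X * (2 * ?m + 3)"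
      using K104.cut_size_lower_bound[OF X] by simp
    moreover define m where "m = ?m"
    then have "m = 1 \<or> m = 2 \<or> m = 3 \<or> m = 4 \<or> m = 5 \<or> m = 6 \<or> m = 7 \<or> m = 8 \<or> m = 9
      \<or> m = 10 \<or> m = 11 \<or> m = 12 \<or> m = 13"
      using False \<open>1 \<le> ?m\<close> by arith
    then have "75 * m \<le> m * (16 - m) * (2 * m + 3)"
      and "2 \<le> m \<Longrightarrow> 75 * m < m * (16 - m) * (2 * m + 3)"
      by auto
    ultimately show ?thesis
      unfolding m_def by linarith
  qed
  then show "75 * ?m \<le> cut104 X * (2 * ?m + 3)" and "2 \<le> ?m \<Longrightarrow> 75 * ?m < cut104 X * (2 * ?m + 3)"
    by auto
qed

lemma component_term_bound_iff:
  fixes m e :: nat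
  assumes "1 \<le> m"
  defines "T \<equiv> (1 + 3 / (2 * real m))\<^sup>2 * e - 25 * real m * (3 / (2 * real m))\<^sup>2"
  shows "75 / 2 \<le> T \<longleftrightarrow> 75 * m \<le> e * (2 * m + 3)"
    and "75 / 2 < T \<longleftrightarrow> 75 * m < e * (2 * m + 3)"
proof -
  define k where "k = (2 * m + 3) / (4 * (real m)\<^sup>2)"
  define a where "a = real (e * (2 * m + 3))"
  define b where "b = real (75 * m)"
  have "0 < real m"
    using assms(1) by simp
  then have "0 < k" and T_eq: "T = 75 / 2 + k * (a - b)"
    by (simp_all add: k_def a_def b_def T_def field_simps power2_eq_square)
  have "75 / 2 \<le> T \<longleftrightarrow> b \<le> a" "75 / 2 < T \<longleftrightarrow> b < a"
    unfolding T_eq using \<open>0 < k\<close> by (simp_all add: zero_le_mult_iff zero_less_mult_iff)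
  then show "75 / 2 \<le> T \<longleftrightarrow> 75 * m \<le> e * (2 * m + 3)" "75 / 2 < T \<longleftrightarrow> 75 * m < e * (2 * m + 3)"
    unfolding a_def b_def of_nat_le_iff of_nat_less_iff .
qed

lemma vertex_cut104_bound:
  assumes cut: "vertex_cut K104 kneser_adj S"
  shows "3 / 2 * num_components kneser_adj (K104 - S) \<le> card S"
    and "\<exists>C\<in>components_in kneser_adj (K104 - S). 2 \<le> card C
      \<Longrightarrow> 3 / 2 * num_components kneser_adj (K104 - S) < card S"
proof -
  let ?comps = "components_in kneser_adj (K104 - S)"
  \<comment> \<open>The weight 3/(2|C|) makes the bound exact on singleton components.\<close>
  define T where "T C = (1 + 3 / (2 * real (card C)))\<^sup>2 * cut104 C - 25 * real (card C) * (3 / (2 * real (card C)))\<^sup>2"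
    for C
  have "S \<subseteq> K104" and two_comps: "2 \<le> num_components kneser_adj (K104 - S)"
    using cut by (simp_all add: vertex_cut_def)
  have "finite ?comps"
    by (simp add: components_in_eq_image finite_kneser_vertices)
  have sum_T: "(\<Sum>C\<in>?comps. T C) \<le> 25 * card S"
    using K104.components_test_vector_bound[OF \<open>S \<subseteq> K104\<close> quadratic_form104_nonneg,
        of "\<lambda>C. 3 / (2 * real (card C))"]
    by (simp add: T_def)
  have T_bound: "75 / 2 \<le> T C \<and> (2 \<le> card C \<longrightarrow> 75 / 2 < T C)" if C: "C \<in> ?comps" for C
  proof -
    have "C \<subseteq> K104"
      using components_in_subset[OF C] by blast
    moreover have "1 \<le> card C"
      using components_in_nonempty[OF C] finite_subset_K104[OF \<open>C \<subseteq> K104\<close>]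
      by (simp add: Suc_le_eq card_gt_0_iff)
    moreover have "14 \<le> card (K104 - C)"
      using K104.card_Diff_component[OF two_comps C] by simp
    ultimately show ?thesis
      using cut104_component_bound component_term_bound_iff[OF \<open>1 \<le> card C\<close>] unfolding T_def by blast
  qed
  have "75 / 2 * num_components kneser_adj (K104 - S) = (\<Sum>C\<in>?comps. 75 / 2)"
    by (simp add: num_components_def)
  also have "\<dots> \<le> (\<Sum>C\<in>?comps. T C)"
    using T_bound by (intro sum_mono) blast
  finally show "3 / 2 * num_components kneser_adj (K104 - S) \<le> card S"
    using sum_T by simp
  assume "\<exists>C\<in>?comps. 2 \<le> card C"
  then have "(\<Sum>C\<in>?comps. 75 / 2) < (\<Sum>C\<in>?comps. T C)"
    using T_bound \<open>finite ?comps\<close> by (intro sum_strict_mono_ex1) blast+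
  then show "3 / 2 * num_components kneser_adj (K104 - S) < card S"
    using sum_T by (simp add: num_components_def)
qed

lemma independent104_card_le:
  assumes "J \<subseteq> K104" and "\<forall>A\<in>J. \<forall>B\<in>J. \<not> kneser_adj A B"
  shows "card J \<le> 84"
proof (cases "2 \<le> card J")
  case True
  have "3 / 2 * card J \<le> card (K104 - J)"
    using vertex_cut104_bound(1)[OF vertex_cut_complement_independent(1)[OF assms True]]
      vertex_cut_complement_independent(2)[OF assms True] by simp
  moreover have "card J \<le> 210"
    using card_mono[OF finite_kneser_vertices assms(1)] card_K104 by simp
  moreover have "card (K104 - J) = 210 - card J"
    using assms(1) card_K104 by (simp add: card_Diff_subset finite_subset_K104)
  ultimately show ?thesis
    by (simp add: of_nat_diff)
qed simp

lemma star104_cut: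
  defines "I \<equiv> {A \<in> K104. 1 \<in> A}"
  shows "vertex_cut K104 kneser_adj (K104 - I)"
    and "real (card (K104 - I)) / real (num_components kneser_adj (K104 - (K104 - I))) = 3 / 2"
proof -
  have "I \<subseteq> K104" "\<forall>A\<in>I. \<forall>B\<in>I. \<not> kneser_adj A B"
    by (auto simp: I_def kneser_adj_def)
  moreover have "card I = 84"
    using card_kneser_star[of 1 10 3] by (simp add: I_def numeral_eq_Suc)
  moreover have "card (K104 - I) = 126"
    using \<open>I \<subseteq> K104\<close> \<open>card I = 84\<close> card_K104 by (simp add: card_Diff_subset finite_subset_K104)
  ultimately show "vertex_cut K104 kneser_adj (K104 - I)"
    and "real (card (K104 - I)) / real (num_components kneser_adj (K104 - (K104 - I))) = 3 / 2"
    using vertex_cut_complement_independent[of I] by simp_all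
qed

lemma tight_cut104_complement_maximum_independent:
  assumes cut: "vertex_cut K104 kneser_adj S" and tight: "3 / 2 * num_components kneser_adj (K104 - S) = card S"
  shows "maximum_independent_set K104 kneser_adj (K104 - S)"
proof -
  let ?W = "K104 - S"
  have "\<forall>C\<in>components_in kneser_adj ?W. card C \<le> 1"
    using vertex_cut104_bound(2)[OF cut] tight by force
  then have indep: "\<forall>A\<in>?W. \<forall>B\<in>?W. \<not> kneser_adj A B"
    using adj_within_small_components[of ?W] K104.adj_irrefl finite_kneser_vertices by blast
  moreover have "S \<subseteq> K104"
    using cut by (simp add: vertex_cut_def)
  then have "card S = 210 - card ?W" "card ?W \<le> 210"
    using card_mono[OF finite_kneser_vertices \<open>S \<subseteq> K104\<close>] card_K104
    by (simp_all add: card_Diff_subset finite_subset_K104)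
  ultimately have "card ?W = 84"
    using tight num_components_independent[OF indep] by (simp add: of_nat_diff)
  with indep show ?thesis
    using independent104_card_le by (simp add: maximum_independent_set_def independent_set_def)
qed

theorem theorem5p4:
  shows "toughness (kneser_vertices 10 4) kneser_adj = 3 / 2 \<and>
    (\<forall>S. vertex_cut (kneser_vertices 10 4) kneser_adj S \<and>
         real (card S) / real (num_components kneser_adj (kneser_vertices 10 4 - S)) = 3 / 2
       \<longrightarrow> (\<exists>I. maximum_independent_set (kneser_vertices 10 4) kneser_adj I \<and>
                S = kneser_vertices 10 4 - I))"
proof -
  let ?ratio = "\<lambda>S. real (card S) / real (num_components kneser_adj (K104 - S))"
  have ratio_ge: "3 / 2 \<le> ?ratio S"
    and ratio_eq: "?ratio S = 3 / 2 \<longleftrightarrow> 3 / 2 * num_components kneser_adj (K104 - S) = card S"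
    if "vertex_cut K104 kneser_adj S" for S
    using vertex_cut104_bound(1)[OF that] that by (auto simp: vertex_cut_def le_divide_eq divide_eq_eq)
  have "toughness K104 kneser_adj = 3 / 2"
    using toughness_eqI[OF finite_kneser_vertices ratio_ge star104_cut] .
  moreover have "maximum_independent_set K104 kneser_adj (K104 - S) \<and> S = K104 - (K104 - S)"
    if "vertex_cut K104 kneser_adj S" and "?ratio S = 3 / 2" for S
    using tight_cut104_complement_maximum_independent[OF that(1)] ratio_eq[OF that(1)] that
    by (auto simp: vertex_cut_def)
  ultimately show ?thesis
    by blast
qed

end
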